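(* Let $A=(a^k)_{k\in[n]}$ be a finite collection (multiset) of points of $[0,1]^2$. For every two average fixed points $x,y$ of $A$, either $x\le\le y$ or $y\le\le x$.
   Context: For vectors, $x\le\le y$ means $x_1\le y_1$ and $x_2\le y_2$. For a finite nonempty multiset $B$, $\operatorname{avg}(B)$ is the arithmetic mean of its elements (with multiplicity). For $x\in[0,1]^2$: $A_{<,<}(x)=\{a\in A:a_1<x_1,a_2<x_2\}$ and $A_{\le,\le}(x)=\{a\in A:a_1\le x_1,a_2\le x_2\}$ (sub-multisets). A point $x$ is an average fixed point of $A$ if there exists a sub-multiset $B\subseteq A_{\le,\le}(x)\setminus A_{<,<}(x)$ such that $\operatorname{avg}\big((A\setminus A_{\le,\le}(x))\cup B\big)=x$. *)

theory Defs
  imports Complex_Main "HOL-Library.Multiset"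
begin

type_synonym pt = "real \<times> real"

definition unit_square :: "pt set" where
  "unit_square = {x. 0 \<le> fst x \<and> fst x \<le> 1 \<and> 0 \<le> snd x \<and> snd x \<le> 1}"

definition leqleq :: "pt \<Rightarrow> pt \<Rightarrow> bool" (infix "\<le>\<le>" 50) where
  "x \<le>\<le> y \<longleftrightarrow> fst x \<le> fst y \<and> snd x \<le> snd y"

definition avg :: "pt multiset \<Rightarrow> pt" where
  "avg B = ((\<Sum>a\<in>#B. fst a) / real (size B), (\<Sum>a\<in>#B. snd a) / real (size B))"

definition A_ltlt :: "pt multiset \<Rightarrow> pt \<Rightarrow> pt multiset" where
  "A_ltlt A x = filter_mset (\<lambda>a. fst a < fst x \<and> snd a < snd x) A"

definition A_lele :: "pt multiset \<Rightarrow> pt \<Rightarrow> pt multiset" where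
  "A_lele A x = filter_mset (\<lambda>a. fst a \<le> fst x \<and> snd a \<le> snd x) A"

definition avg_fixed_point :: "pt multiset \<Rightarrow> pt \<Rightarrow> bool" where
  "avg_fixed_point A x \<longleftrightarrow> x \<in> unit_square \<and>
     (\<exists>B. B \<subseteq># A_lele A x - A_ltlt A x \<and>
          (A - A_lele A x) + B \<noteq> {#} \<and>
          avg ((A - A_lele A x) + B) = x)"

end

theory Submission
  imports Defs
begin

text \<open>
  Let \<open>P\<close> and \<open>Q\<close> be the multisets averaging to two fixed points \<open>x\<close> and \<open>y\<close> with
  \<open>x\<^sub>1 < y\<^sub>1\<close> and \<open>y\<^sub>2 < x\<^sub>2\<close>, and measure points by \<open>f a = a\<^sub>1 - a\<^sub>2\<close>, so \<open>f x < f y\<close>.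
  A point that \<open>P\<close> keeps with higher multiplicity than \<open>Q\<close> must lie weakly below \<open>y\<close>
  (above it \<open>Q\<close> keeps all of \<open>A\<close>) but not strictly below \<open>x\<close>, which forces \<open>f a > f x\<close>;
  symmetrically every point of \<open>Q - P\<close> has \<open>f a \<le> f y\<close>.  Removing from \<open>P\<close> points above
  its mean and from \<open>Q\<close> points below its mean leaves the common part \<open>P \<inter># Q\<close> with mean
  both below \<open>f x\<close> and above \<open>f y\<close>, which is impossible.
\<close>

lemma sum_mset_subtractf:
  fixes f g :: "'a \<Rightarrow> 'b::ab_group_add"
  shows "(\<Sum>a\<in>#M. f a - g a) = (\<Sum>a\<in>#M. f a) - (\<Sum>a\<in>#M. g a)"
  by (induction M) simp_all

lemma sum_mset_strict_mono:
  fixes g h :: "'a \<Rightarrow> 'b::ordered_cancel_comm_monoid_add"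
  assumes "M \<noteq> {#}" and "\<And>a. a \<in># M \<Longrightarrow> g a < h a"
  shows "(\<Sum>a\<in>#M. g a) < (\<Sum>a\<in>#M. h a)"
  using assms
proof (induction M)
  case empty
  then show ?case by simp
next
  case (add b M)
  have "(\<Sum>a\<in>#M. g a) \<le> (\<Sum>a\<in>#M. h a)"
    using add.prems(2) by (intro sum_mset_mono) (simp add: less_imp_le)
  with add.prems(2) show ?case
    by (simp add: add_less_le_mono)
qed

lemma mean_le_of_diff_bounds:
  fixes f :: "'a \<Rightarrow> real"
  assumes "P \<noteq> {#}"
    and mean_P: "(\<Sum>a\<in>#P. f a) = real (size P) * s"
    and mean_Q: "(\<Sum>a\<in>#Q. f a) = real (size Q) * t"
    and above: "\<And>a. a \<in># P - Q \<Longrightarrow> s < f a"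
    and below: "\<And>a. a \<in># Q - P \<Longrightarrow> f a \<le> t"
  shows "t \<le> s"
proof (rule ccontr)
  assume "\<not> t \<le> s"
  define I where "I = P \<inter># Q"
  have split_P: "I + (P - Q) = P"
    unfolding I_def by (simp add: inter_mset_def)
  have split_Q: "I + (Q - P) = Q"
    unfolding I_def subset_mset.inf_commute[of P Q] by (simp add: inter_mset_def)
  have "(\<Sum>a\<in>#I + (P - Q). f a) = real (size (I + (P - Q))) * s"
    using mean_P by (simp only: split_P)
  then have sum_P: "(\<Sum>a\<in>#I. f a) + (\<Sum>a\<in>#P - Q. f a) = (real (size I) + real (size (P - Q))) * s"
    by simp
  have "(\<Sum>a\<in>#I + (Q - P). f a) = real (size (I + (Q - P))) * t"
    using mean_Q by (simp only: split_Q)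
  then have sum_Q: "(\<Sum>a\<in>#I. f a) + (\<Sum>a\<in>#Q - P. f a) = (real (size I) + real (size (Q - P))) * t"
    by simp
  have "(\<Sum>a\<in>#P - Q. s) \<le> (\<Sum>a\<in>#P - Q. f a)"
    using above by (intro sum_mset_mono) (simp add: less_imp_le)
  moreover have "(\<Sum>a\<in>#Q - P. f a) \<le> (\<Sum>a\<in>#Q - P. t)"
    using below by (intro sum_mset_mono)
  ultimately have "real (size I) * t \<le> real (size I) * s"
    using sum_P sum_Q by (simp add: distrib_right)
  with \<open>\<not> t \<le> s\<close> have "I = {#}"
    by (simp add: mult_le_cancel_left)
  then have "P - Q \<noteq> {#}"
    using split_P \<open>P \<noteq> {#}\<close> by simp
  then have "(\<Sum>a\<in>#P - Q. s) < (\<Sum>a\<in>#P - Q. f a)"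
    using above by (rule sum_mset_strict_mono)
  with sum_P \<open>I = {#}\<close> show False
    by simp
qed

lemma mem_diff_of_count_eq_outside:
  assumes "P \<subseteq># A"
    and "\<And>a. \<not> R a \<Longrightarrow> count Q a = count A a"
    and "a \<in># P - Q"
  shows "R a"
proof (rule ccontr)
  assume "\<not> R a"
  then have "count P a \<le> count Q a"
    using assms(1,2) by (simp add: mset_subset_eq_count)
  with assms(3) show False
    by (simp add: in_diff_count)
qed

lemma avg_fixed_pointE:
  assumes "avg_fixed_point A x"
  obtains P where "P \<subseteq># A" "P \<noteq> {#}"
    "\<And>a. \<not> a \<le>\<le> x \<Longrightarrow> count P a = count A a"
    "\<And>a. a \<in># P \<Longrightarrow> \<not> (fst a < fst x \<and> snd a < snd x)"
    "(\<Sum>a\<in>#P. fst a) = real (size P) * fst x"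
    "(\<Sum>a\<in>#P. snd a) = real (size P) * snd x"
proof -
  obtain B where B: "B \<subseteq># A_lele A x - A_ltlt A x"
    and ne: "A - A_lele A x + B \<noteq> {#}" and av: "avg (A - A_lele A x + B) = x"
    using assms unfolding avg_fixed_point_def by blast
  define P where "P = A - A_lele A x + B"
  have count_B: "count B a \<le> count (A_lele A x - A_ltlt A x) a" for a
    using B by (rule mset_subset_eq_count)
  have count_P: "count P a =
      (if a \<le>\<le> x then (if fst a < fst x \<and> snd a < snd x then 0 else count B a) else count A a)" for a
    using count_B[of a] unfolding P_def A_lele_def A_ltlt_def leqleq_def by auto
  show thesis
  proof (rule that)
    show "P \<subseteq># A"
      unfolding subseteq_mset_def
    proof
      fix a
      show "count P a \<le> count A a"
        using count_B[of a] unfolding count_P A_lele_def A_ltlt_def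
        by (simp add: leqleq_def split: if_split_asm)
    qed
    show "P \<noteq> {#}"
      using ne by (simp add: P_def)
    show "count P a = count A a" if "\<not> a \<le>\<le> x" for a
      using that by (simp add: count_P)
    show "\<not> (fst a < fst x \<and> snd a < snd x)" if "a \<in># P" for a
    proof -
      have "count P a > 0"
        using that by simp
      then show ?thesis
        using count_P[of a] by (auto simp: leqleq_def split: if_splits)
    qed
    have "size P > 0"
      using ne unfolding P_def by (simp add: nonempty_has_size)
    then show "(\<Sum>a\<in>#P. fst a) = real (size P) * fst x" "(\<Sum>a\<in>#P. snd a) = real (size P) * snd x"
      using av[folded P_def] unfolding avg_def by auto
  qed
qed

lemma avg_fixed_points_not_crossing:
  assumes "avg_fixed_point A x" and "avg_fixed_point A y"
    and "fst x < fst y" and "snd y < snd x"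
  shows False
proof -
  obtain P where P: "P \<subseteq># A" "P \<noteq> {#}"
    "\<And>a. \<not> a \<le>\<le> x \<Longrightarrow> count P a = count A a"
    "\<And>a. a \<in># P \<Longrightarrow> \<not> (fst a < fst x \<and> snd a < snd x)"
    "(\<Sum>a\<in>#P. fst a) = real (size P) * fst x" "(\<Sum>a\<in>#P. snd a) = real (size P) * snd x"
    by (rule avg_fixed_pointE[OF assms(1)]) (rule that)
  obtain Q where Q: "Q \<subseteq># A" "Q \<noteq> {#}"
    "\<And>a. \<not> a \<le>\<le> y \<Longrightarrow> count Q a = count A a"
    "\<And>a. a \<in># Q \<Longrightarrow> \<not> (fst a < fst y \<and> snd a < snd y)"
    "(\<Sum>a\<in>#Q. fst a) = real (size Q) * fst y" "(\<Sum>a\<in>#Q. snd a) = real (size Q) * snd y"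
    by (rule avg_fixed_pointE[OF assms(2)]) (rule that)
  define f where "f a = fst a - snd a" for a :: pt
  have "f y \<le> f x"
  proof (rule mean_le_of_diff_bounds[of P f _ Q])
    show "(\<Sum>a\<in>#P. f a) = real (size P) * f x" "(\<Sum>a\<in>#Q. f a) = real (size Q) * f y"
      using P(5,6) Q(5,6) by (simp_all add: f_def sum_mset_subtractf right_diff_distrib)
    show "f x < f a" if "a \<in># P - Q" for a
      using mem_diff_of_count_eq_outside[where R = "\<lambda>b. b \<le>\<le> y", OF P(1) Q(3) that]
        P(4)[of a] that assms(4)
      by (auto simp: f_def leqleq_def dest: in_diffD)
    show "f a \<le> f y" if "a \<in># Q - P" for a
      using mem_diff_of_count_eq_outside[where R = "\<lambda>b. b \<le>\<le> x", OF Q(1) P(3) that]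
        Q(4)[of a] that assms(3)
      by (auto simp: f_def leqleq_def dest: in_diffD)
  qed (fact P(2))
  with assms(3,4) show False
    by (simp add: f_def)
qed

theorem lemma2:
  fixes A :: "pt multiset" and x y :: pt
  assumes "set_mset A \<subseteq> unit_square"
    and "avg_fixed_point A x" and "avg_fixed_point A y"
  shows "x \<le>\<le> y \<or> y \<le>\<le> x"
  using avg_fixed_points_not_crossing[OF assms(2,3)] avg_fixed_points_not_crossing[OF assms(3,2)]
  unfolding leqleq_def by fastforce

end
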